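(* Let $0<a<b$. For every $x\in[0,1]$, $$-\log g_{a,b}(x)=\frac{1}{b-a}\sum_{n\ge1}\Bigl(\tfrac{a}{b-a}n+1\Bigr)_{n-1}\frac{(x^a-x^b)^n}{n!},$$ the series converging absolutely. In particular, for $x\in[(a/b)^{1/(b-a)},1]$ the right-hand side equals $-\log x$, and for $x\in[0,(a/b)^{1/(b-a)}]$ it equals $-\log f_{a,b}(x)$.
   Context: $(c)_n=\Gamma(c+n)/\Gamma(c)$ is the Pochhammer symbol. For $0<a<b$ let $\phi_{a,b}(x)=x^a-x^b$ on $[0,1]$; it is strictly increasing on $[0,x_0]$ and strictly decreasing on $[x_0,1]$, where $x_0=(a/b)^{1/(b-a)}$. Let $l_{a,b},r_{a,b}$ be its restrictions to $[0,x_0]$ and $[x_0,1]$. Define $f_{a,b}(x)=r_{a,b}^{-1}(\phi_{a,b}(x))$ for $0\le x\le x_0$, $f_{a,b}(x)=l_{a,b}^{-1}(\phi_{a,b}(x))$ for $x_0\le x\le1$, and $g_{a,b}(x)=r_{a,b}^{-1}(\phi_{a,b}(x))$ for $0\le x\le1$ (so $g_{a,b}=f_{a,b}$ on $[0,x_0]$ and $g_{a,b}(x)=x$ on $[x_0,1]$). *)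

theory Defs
  imports "HOL-Analysis.Analysis"
begin

definition phi :: "real \<Rightarrow> real \<Rightarrow> real \<Rightarrow> real" where
  "phi a b x = x powr a - x powr b"

definition x0 :: "real \<Rightarrow> real \<Rightarrow> real" where
  "x0 a b = (a / b) powr (1 / (b - a))"

definition linv :: "real \<Rightarrow> real \<Rightarrow> real \<Rightarrow> real" where
  "linv a b = inv_into {0..x0 a b} (phi a b)"

definition rinv :: "real \<Rightarrow> real \<Rightarrow> real \<Rightarrow> real" where
  "rinv a b = inv_into {x0 a b..1} (phi a b)"

definition f_ab :: "real \<Rightarrow> real \<Rightarrow> real \<Rightarrow> real" where
  "f_ab a b x = (if x \<le> x0 a b then rinv a b (phi a b x) else linv a b (phi a b x))"

definition g_ab :: "real \<Rightarrow> real \<Rightarrow> real \<Rightarrow> real" where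
  "g_ab a b x = rinv a b (phi a b x)"

definition series_term :: "real \<Rightarrow> real \<Rightarrow> real \<Rightarrow> nat \<Rightarrow> real" where
  "series_term a b x n =
     pochhammer (a / (b - a) * real n + 1) (n - 1) * (x powr a - x powr b) ^ n / fact n"

end

theory Submission
  imports Defs "HOL-Computational_Algebra.Formal_Laurent_Series" "HOL-Computational_Algebra.Polynomial_FPS"
begin

text \<open>
  Substituting \<open>c = a / (b - a)\<close> and \<open>w = 1 - y powr (b - a)\<close> turns \<open>phi a b y\<close> into
  \<open>psi c w = w * (1 - w) powr c\<close> and \<open>- ln y\<close> into \<open>- ln (1 - w) / (b - a)\<close>; the right
  branch \<open>x0 a b \<le> y \<le> 1\<close> becomes \<open>0 \<le> w \<le> 1 / (1 + c)\<close>, where \<open>psi c\<close> increases.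
  So the series is the expansion of \<open>- ln (1 - w)\<close> in powers of \<open>t = psi c w\<close>, and its
  coefficients \<open>(c n + 1)\<^sub>n\<^sub>-\<^sub>1 / n!\<close> come from Lagrange inversion, proved here with residues
  of formal Laurent series. All coefficients involved are nonnegative, so the formal identities
  can be evaluated at every admissible \<open>t\<close>, including the boundary of convergence
  \<open>t = psi c (1 / (1 + c))\<close>.
\<close>

section \<open>The binomial series of \<open>(1 - X) powr (- d)\<close>\<close>

definition fps_pochhammer :: "'a::field_char_0 \<Rightarrow> 'a fps" where
  "fps_pochhammer d = Abs_fps (\<lambda>k. pochhammer d k / fact k)"

lemma fps_pochhammer_nth [simp]: "fps_pochhammer d $ k = pochhammer d k / fact k"
  by (simp add: fps_pochhammer_def)

lemma fps_pochhammer_nth_gbinomial: "fps_pochhammer d $ k = (-1) ^ k * ((-d) gchoose k)"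
  by (simp add: gbinomial_pochhammer)

lemma fps_pochhammer_add: "fps_pochhammer c * fps_pochhammer d = fps_pochhammer (c + d)"
proof (rule fps_ext)
  fix n
  have "(fps_pochhammer c * fps_pochhammer d) $ n
      = (-1) ^ n * (\<Sum>i=0..n. ((-c) gchoose i) * ((-d) gchoose (n - i)))"
    unfolding fps_mult_nth fps_pochhammer_nth_gbinomial sum_distrib_left
    by (intro sum.cong refl) (simp add: power_add [symmetric])
  then show "(fps_pochhammer c * fps_pochhammer d) $ n = fps_pochhammer (c + d) $ n"
    by (simp only: gbinomial_Vandermonde fps_pochhammer_nth_gbinomial) simp
qed

lemma fps_pochhammer_0 [simp]: "fps_pochhammer 0 = 1"
  by (rule fps_ext) (simp add: pochhammer_0_left)

lemma fps_pochhammer_power: "fps_pochhammer d ^ n = fps_pochhammer (of_nat n * d)"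
  by (induction n) (simp_all add: fps_pochhammer_add algebra_simps)

lemma fps_pochhammer_nth_nonneg:
  fixes d :: real
  assumes "d \<ge> 0"
  shows "fps_pochhammer d $ k \<ge> 0"
  using assms by (cases "d = 0") (auto simp: pochhammer_0_left intro!: divide_nonneg_pos pochhammer_nonneg)

lemma sums_fps_pochhammer:
  fixes d g :: real
  assumes "\<bar>g\<bar> < 1"
  shows "(\<lambda>k. fps_pochhammer d $ k * g ^ k) sums ((1 - g) powr (- d))"
proof -
  have "((-d) gchoose k) * (- g) ^ k = fps_pochhammer d $ k * g ^ k" for k
    unfolding fps_pochhammer_nth_gbinomial power_minus[of g] by (simp add: mult_ac)
  then show ?thesis
    using gen_binomial_real[of "-g" "-d"] assms by simp
qed

section \<open>Lagrange inversion\<close>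

lemma fls_residue_deriv_times_inverse_power:
  fixes f :: "'a::field_char_0 fls"
  shows "fls_residue (fls_deriv f * inverse f ^ Suc m) = (if m = 0 then of_int (fls_subdegree f) else 0)"
proof (cases m)
  case 0
  then show ?thesis by (simp add: fls_residue_deriv_times_inverse_eq_subdegree del: fls_residue_def)
next
  case (Suc k)
  have "fls_deriv (inverse f ^ Suc k)
      = fls_const (of_nat (Suc k)) * inverse f ^ k * (- fls_deriv f * (inverse f)\<^sup>2)"
    by (simp only: fls_deriv_power fls_inverse_deriv fls_of_nat diff_Suc_1)
  also have "\<dots> = - fls_const (of_nat (Suc k)) * (fls_deriv f * inverse f ^ Suc m)"
    by (simp only: Suc power_Suc power2_eq_square) (simp add: algebra_simps del: of_nat_Suc)
  finally have deriv: "fls_deriv (inverse f ^ Suc k) = \<dots>" .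
  have "fls_deriv f * inverse f ^ Suc m
      = fls_deriv (fls_const (- 1 / of_nat (Suc k)) * inverse f ^ Suc k)"
    unfolding fls_deriv_mult_const_left deriv
    by (simp add: mult.assoc[symmetric] fls_const_mult_const del: of_nat_Suc)
  then show ?thesis by (simp only: fls_residue_deriv) (simp add: Suc)
qed

lemma fls_residue_deriv_power_times_inverse_power:
  fixes f :: "'a::field_char_0 fls"
  assumes "f \<noteq> 0" "j \<le> n"
  shows "fls_residue (fls_deriv (f ^ j) * inverse f ^ n)
    = (if j = n then of_nat n * of_int (fls_subdegree f) else 0)"
proof (cases j)
  case 0
  then show ?thesis by simp
next
  case (Suc i)
  obtain m where n: "n = i + Suc m"
    using assms(2) Suc by (metis add_Suc_shift le_Suc_ex)
  have cancel: "f ^ i * inverse f ^ (i + Suc m) = inverse f ^ Suc m"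
    using assms(1) by (simp add: power_add mult.assoc[symmetric] power_mult_distrib[symmetric])
  have "fls_deriv (f ^ j) = fls_const (of_nat j) * f ^ i * fls_deriv f"
    by (simp only: fls_deriv_power Suc diff_Suc_1 fls_of_nat)
  then have "fls_deriv (f ^ j) * inverse f ^ n
      = fls_const (of_nat j) * (fls_deriv f * (f ^ i * inverse f ^ (i + Suc m)))"
    by (simp only: n) (simp only: mult_ac)
  then have "fls_deriv (f ^ j) * inverse f ^ n = fls_const (of_nat j) * (fls_deriv f * inverse f ^ Suc m)"
    by (simp only: cancel)
  then show ?thesis
    by (simp only: fls_residue_fls_const_times fls_residue_deriv_times_inverse_power) (simp add: Suc n)
qed

lemma fls_residue_deriv_fps_power_Suc_times_inverse_power:
  fixes P Q :: "'a::field_char_0 fps"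
  assumes "P \<noteq> 0"
  shows "fls_residue (fls_deriv (fps_to_fls (P ^ Suc n * Q)) * inverse (fps_to_fls P) ^ n) = 0"
proof -
  define p where "p = fps_to_fls P"
  have cancel: "p ^ n * inverse p ^ n = 1"
    using assms by (simp add: p_def power_mult_distrib[symmetric])
  have "fls_deriv (p ^ Suc n * fps_to_fls Q) * inverse p ^ n
      = (of_nat (Suc n) * fls_deriv p * fps_to_fls Q + p * fls_deriv (fps_to_fls Q)) * (p ^ n * inverse p ^ n)"
    unfolding fls_deriv_mult fls_deriv_power diff_Suc_1 by (simp add: algebra_simps del: of_nat_Suc)
  also have "\<dots> = fps_to_fls (of_nat (Suc n) * fps_deriv P * Q + P * fps_deriv Q)"
    by (simp only: cancel mult_1_right)
      (simp add: p_def fls_deriv_fps_to_fls fls_times_fps_to_fls fps_to_fls_of_nat del: of_nat_Suc)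
  finally show ?thesis
    by (simp only: fls_times_fps_to_fls fps_to_fls_power p_def [symmetric]) simp
qed

lemma fps_cutoff_conv_sum: "fps_cutoff n f = (\<Sum>i<n. fps_const (f $ i) * fps_X ^ i)"
proof (rule fps_ext)
  fix m
  have "(fps_const (f $ i) * fps_X ^ i) $ m = (if i = m then f $ m else 0)" for i
    by (simp add: fps_X_power_mult_right_nth)
  then show "fps_cutoff n f $ m = (\<Sum>i<n. fps_const (f $ i) * fps_X ^ i) $ m"
    by (simp add: fps_sum_nth)
qed

theorem lagrange_inversion:
  fixes P Y :: "'a::field_char_0 fps"
  assumes P0: "P $ 0 = 0" and P1: "P $ 1 \<noteq> 0"
  shows "of_nat n * (Y oo fps_inv P) $ n
    = fls_residue (fls_deriv (fps_to_fls Y) * inverse (fps_to_fls P) ^ n)"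
proof -
  define K where "K = Y oo fps_inv P"
  define R where "R F = fls_residue (fls_deriv (fps_to_fls F) * inverse (fps_to_fls P) ^ n)" for F
  have R_add: "R (F + H) = R F + R H" for F H
    by (simp add: R_def distrib_right)
  have R_sum: "R (\<Sum>j\<in>J. fps_const (c j) * H j) = (\<Sum>j\<in>J. c j * R (H j))" for J c H
    by (induction J rule: infinite_finite_induct)
      (simp_all add: R_add R_def fls_times_fps_to_fls distrib_right mult.assoc
        flip: fls_residue_fls_const_times(1))
  have "P \<noteq> 0" using P1 by auto
  have "subdegree P = 1" using P0 P1 by (intro subdegreeI) auto
  then have R_power: "j \<le> n \<Longrightarrow> R (P ^ j) = (if j = n then of_nat n else 0)" for j
    using fls_residue_deriv_power_times_inverse_power[of "fps_to_fls P" j n] \<open>P \<noteq> 0\<close>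
    by (simp add: R_def fps_to_fls_power fls_subdegree_fls_to_fps)
  have "K oo P = Y"
    using fps_compose_assoc[of P "fps_inv P" Y] fps_inv[OF P0 P1] P0
    by (simp add: K_def fps_inv_def)
  have X_compose: "fps_X ^ j oo P = P ^ j" for j
    using fps_compose_power[of P fps_X j] P0 by simp
  \<comment> \<open>Expand \<open>Y\<close> in powers of \<open>P\<close>; under \<open>R\<close> only the term \<open>K $ n * P ^ n\<close> survives.\<close>
  have "K = fps_cutoff (Suc n) K + fps_X ^ Suc n * fps_shift (Suc n) K"
    by (metis fps_shift_cutoff' add.commute)
  then have "Y = (fps_cutoff (Suc n) K + fps_X ^ Suc n * fps_shift (Suc n) K) oo P"
    using \<open>K oo P = Y\<close> by simp
  also have "\<dots> = (\<Sum>j<Suc n. fps_const (K $ j) * P ^ j) + P ^ Suc n * (fps_shift (Suc n) K oo P)"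
    by (simp only: fps_cutoff_conv_sum fps_compose_add_distrib fps_compose_sum_distrib
        fps_compose_mult_distrib[OF P0] X_compose fps_const_compose)
  finally have Y_expansion: "Y = \<dots>" .
  have R_tail: "R (P ^ Suc n * F) = 0" for F
    unfolding R_def by (rule fls_residue_deriv_fps_power_Suc_times_inverse_power[OF \<open>P \<noteq> 0\<close>])
  have "R Y = (\<Sum>j<Suc n. K $ j * R (P ^ j))"
    by (subst Y_expansion) (simp only: R_add R_sum R_tail add_0_right)
  also have "\<dots> = of_nat n * K $ n"
    by (simp add: R_power sum.neutral)
  finally show ?thesis by (simp add: R_def K_def)
qed

section \<open>The compositional inverse of \<open>w (1 - w) powr c\<close>\<close>

definition psi_fps :: "'a::field_char_0 \<Rightarrow> 'a fps" where
  "psi_fps c = fps_X * fps_pochhammer (- c)"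

lemma psi_fps_nth_0 [simp]: "psi_fps c $ 0 = 0"
  and psi_fps_nth_1 [simp]: "psi_fps c $ Suc 0 = 1"
  by (simp_all add: psi_fps_def)

lemma inverse_psi_fps_power:
  "inverse (fps_to_fls (psi_fps c)) ^ n = fls_shift (int n) (fps_to_fls (fps_pochhammer (of_nat n * c)))"
proof -
  have "fps_to_fls (psi_fps c) * fls_shift 1 (fps_to_fls (fps_pochhammer c)) = 1"
    by (simp add: psi_fps_def fls_times_fps_to_fls fls_X_times_conv_shift fls_shifted_times_simps
        fps_pochhammer_add mult.assoc flip: fls_times_fps_to_fls)
  then have "inverse (fps_to_fls (psi_fps c)) = fls_shift 1 (fps_to_fls (fps_pochhammer c))"
    by (simp add: inverse_unique)
  then show ?thesis
    by (simp add: fls_shifted_pow fps_pochhammer_power flip: fps_to_fls_power)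
qed

lemma fls_residue_times_shift_fps_to_fls:
  fixes A B :: "'a::comm_ring_1 fps"
  assumes "n \<ge> 1"
  shows "fls_residue (fps_to_fls A * fls_shift (int n) (fps_to_fls B)) = (A * B) $ (n - 1)"
proof -
  have "fps_to_fls A * fls_shift (int n) (fps_to_fls B) = fls_shift (int n) (fps_to_fls (A * B))"
    by (subst fls_shifted_times_simps(1)) (simp add: fls_times_fps_to_fls)
  moreover have "nat (-1 + int n) = n - 1" using assms by simp
  ultimately show ?thesis using assms by simp
qed

lemma lagrange_inversion_psi_fps:
  assumes "n \<ge> 1"
  shows "of_nat n * (Y oo fps_inv (psi_fps c)) $ n = (fps_deriv Y * fps_pochhammer (of_nat n * c)) $ (n - 1)"
  using lagrange_inversion[of "psi_fps c" n Y] fls_residue_times_shift_fps_to_fls[OF assms]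
  by (simp add: inverse_psi_fps_power fls_deriv_fps_to_fls del: fls_residue_def)

lemma fps_inv_psi_fps_nth:
  assumes "n \<ge> 1"
  shows "of_nat n * fps_inv (psi_fps c) $ n = fps_pochhammer (of_nat n * c) $ (n - 1)"
  using lagrange_inversion_psi_fps[OF assms, of fps_X c] by (simp add: fps_inv_def)

lemma fps_inv_psi_fps_nth_nonneg:
  fixes c :: real
  assumes "c \<ge> 0"
  shows "fps_inv (psi_fps c) $ n \<ge> 0"
proof (cases n)
  case (Suc m)
  then have "of_nat n * fps_inv (psi_fps c) $ n \<ge> 0"
    using fps_inv_psi_fps_nth[of n c] fps_pochhammer_nth_nonneg[of "of_nat n * c"] assms by simp
  then show ?thesis using Suc by (simp add: zero_le_mult_iff)
qed (simp add: fps_inv_def)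

lemma fps_inv_psi_fps_eq: "fps_inv (psi_fps c) = fps_X * (fps_pochhammer c oo fps_inv (psi_fps c))"
proof -
  define G where "G = fps_inv (psi_fps c)"
  have "G $ 0 = 0" by (simp add: G_def fps_inv_def)
  have "psi_fps c oo G = fps_X" unfolding G_def by (rule fps_inv_right) simp_all
  then have "G * (fps_pochhammer (- c) oo G) = fps_X"
    using \<open>G $ 0 = 0\<close> by (simp add: psi_fps_def fps_compose_mult_distrib)
  moreover have "(fps_pochhammer (- c) oo G) * (fps_pochhammer c oo G) = 1"
    using \<open>G $ 0 = 0\<close> by (simp add: fps_compose_mult_distrib [symmetric] fps_pochhammer_add)
  ultimately have "G = fps_X * (fps_pochhammer c oo G)"
    by (metis mult.assoc mult_1_right)
  then show ?thesis by (simp add: G_def)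
qed

definition fps_neg_ln_one_minus :: "'a::field_char_0 fps" where
  "fps_neg_ln_one_minus = Abs_fps (\<lambda>m. if m = 0 then 0 else 1 / of_nat m)"

lemma fps_deriv_fps_neg_ln_one_minus: "fps_deriv fps_neg_ln_one_minus = fps_pochhammer 1"
  by (rule fps_ext) (simp add: fps_neg_ln_one_minus_def pochhammer_fact [symmetric] del: of_nat_Suc)

lemma lagrange_ln_series_nth:
  assumes "n \<ge> 1"
  shows "(fps_neg_ln_one_minus oo fps_inv (psi_fps c)) $ n = pochhammer (c * of_nat n + 1) (n - 1) / fact n"
proof -
  have "of_nat n * (fps_neg_ln_one_minus oo fps_inv (psi_fps c)) $ n
      = pochhammer (c * of_nat n + 1) (n - 1) / fact (n - 1)"
    using lagrange_inversion_psi_fps[OF assms, of fps_neg_ln_one_minus c]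
    by (simp add: fps_deriv_fps_neg_ln_one_minus fps_pochhammer_add algebra_simps)
  moreover have "fact n = of_nat n * (fact (n - 1) :: 'a)"
    using assms fact_reduce[of n] by simp
  ultimately show ?thesis using assms by (simp add: field_simps)
qed

section \<open>Evaluating power series with nonnegative coefficients\<close>

lemma fps_mult_nth_mono:
  fixes F F' H H' :: "'a::linordered_semidom fps"
  assumes "\<And>n. 0 \<le> F $ n" "\<And>n. F $ n \<le> F' $ n" "\<And>n. 0 \<le> H $ n" "\<And>n. H $ n \<le> H' $ n"
  shows "0 \<le> (F * H) $ n \<and> (F * H) $ n \<le> (F' * H') $ n"
  unfolding fps_mult_nth using assms
  by (auto intro!: sum_nonneg mult_nonneg_nonneg sum_mono mult_mono intro: order_trans)

lemma fps_power_nth_mono: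
  fixes F F' :: "'a::linordered_semidom fps"
  assumes "\<And>n. 0 \<le> F $ n" "\<And>n. F $ n \<le> F' $ n"
  shows "0 \<le> (F ^ k) $ n \<and> (F ^ k) $ n \<le> (F' ^ k) $ n"
proof (induction k arbitrary: n)
  case (Suc k)
  show ?case unfolding power_Suc
    by (rule fps_mult_nth_mono) (use assms Suc in auto)
qed simp

lemma fps_compose_nth_nonneg:
  fixes A B :: "'a::linordered_semidom fps"
  assumes "\<And>n. 0 \<le> A $ n" "\<And>n. 0 \<le> B $ n"
  shows "0 \<le> (A oo B) $ n"
  unfolding fps_compose_nth using assms fps_power_nth_mono[of B B]
  by (intro sum_nonneg mult_nonneg_nonneg) auto

lemma fps_cutoff_power_nth:
  assumes "n < N"
  shows "(fps_cutoff N F ^ k) $ n = (F ^ k) $ n"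
  using assms
proof (induction k arbitrary: n)
  case (Suc k)
  then show ?case
    unfolding power_Suc fps_cutoff_left_mult_nth[OF Suc.prems] fps_mult_nth
    by (intro sum.cong refl) simp
qed simp

lemma coeff_truncate_fps_power:
  "n < N \<Longrightarrow> coeff (truncate_fps N F ^ k) n = (F ^ k) $ n"
  using fps_cutoff_power_nth[of n N F k]
  by (simp only: fps_of_poly_nth [symmetric] fps_of_poly_power fps_of_poly_truncate)

lemma coeff_truncate_fps_power_le:
  fixes F :: "'a::linordered_semidom fps"
  assumes "\<And>n. 0 \<le> F $ n"
  shows "0 \<le> coeff (truncate_fps N F ^ k) n \<and> coeff (truncate_fps N F ^ k) n \<le> (F ^ k) $ n"
  using fps_power_nth_mono[of "fps_cutoff N F" F k n] assms
  by (simp only: fps_of_poly_nth [symmetric] fps_of_poly_power fps_of_poly_truncate) simp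

lemma poly_conv_sum_lessThan:
  fixes q :: "'a::comm_semiring_1 poly"
  assumes "degree q < D"
  shows "poly q t = (\<Sum>i<D. coeff q i * t ^ i)"
proof -
  have "(\<Sum>i\<le>degree q. coeff q i * t ^ i) = (\<Sum>i<D. coeff q i * t ^ i)"
    using assms by (intro sum.mono_neutral_left) (auto simp: coeff_eq_0)
  then show ?thesis by (simp add: poly_altdef)
qed

lemma poly_truncate_fps:
  fixes F :: "'a::comm_semiring_1 fps"
  shows "poly (truncate_fps N F) t = (\<Sum>j<N. F $ j * t ^ j)"
proof (cases "N = 0")
  case False
  then show ?thesis
    by (simp add: poly_conv_sum_lessThan[OF degree_truncate_fps] coeff_truncate_fps)
qed simp

lemma sum_lessThan_coeff_le_poly:
  fixes q :: "real poly"
  assumes "\<And>i. coeff q i \<ge> 0" "t \<ge> 0"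
  shows "(\<Sum>i<N. coeff q i * t ^ i) \<le> poly q t"
proof -
  have "(\<Sum>i<N. coeff q i * t ^ i) \<le> (\<Sum>i<max N (Suc (degree q)). coeff q i * t ^ i)"
    using assms by (intro sum_mono2) auto
  also have "\<dots> = poly q t" by (rule poly_conv_sum_lessThan [symmetric]) simp
  finally show ?thesis .
qed

lemma fps_compose_partial_sum_le:
  fixes A B :: "real fps"
  assumes A: "\<And>n. 0 \<le> A $ n" and B: "\<And>n. 0 \<le> B $ n" and t: "t \<ge> 0"
  shows "(\<Sum>n<N. (A oo B) $ n * t ^ n) \<le> (\<Sum>k<N. A $ k * (\<Sum>j<N. B $ j * t ^ j) ^ k)"
proof -
  have "(\<Sum>n<N. (A oo B) $ n * t ^ n) = (\<Sum>n<N. \<Sum>k\<in>{0..n}. A $ k * (B ^ k) $ n * t ^ n)"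
    by (simp add: fps_compose_nth sum_distrib_right)
  also have "\<dots> \<le> (\<Sum>n<N. \<Sum>k<N. A $ k * (B ^ k) $ n * t ^ n)"
    using A B t fps_power_nth_mono[of B B]
    by (intro sum_mono sum_mono2) (auto intro!: mult_nonneg_nonneg)
  also have "\<dots> = (\<Sum>k<N. A $ k * (\<Sum>n<N. coeff (truncate_fps N B ^ k) n * t ^ n))"
    by (subst sum.swap) (simp add: coeff_truncate_fps_power sum_distrib_left mult.assoc)
  also have "\<dots> \<le> (\<Sum>k<N. A $ k * poly (truncate_fps N B ^ k) t)"
    using A coeff_truncate_fps_power_le[OF B] t
    by (intro sum_mono mult_left_mono sum_lessThan_coeff_le_poly) auto
  also have "\<dots> = (\<Sum>k<N. A $ k * (\<Sum>j<N. B $ j * t ^ j) ^ k)"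
    by (simp add: poly_power poly_truncate_fps)
  finally show ?thesis .
qed

lemma fps_compose_partial_sum_ge:
  fixes A B :: "real fps"
  assumes A: "\<And>n. 0 \<le> A $ n" and B: "\<And>n. 0 \<le> B $ n" and B0: "B $ 0 = 0" and t: "t \<ge> 0"
  obtains N where "(\<Sum>k<K. A $ k * (\<Sum>j<M. B $ j * t ^ j) ^ k) \<le> (\<Sum>n<N. (A oo B) $ n * t ^ n)"
proof
  define T where "T = truncate_fps M B"
  define N where "N = Suc (K * degree T)"
  have degree_less: "degree (T ^ k) < N" if "k < K" for k
  proof -
    have "degree (T ^ k) \<le> degree T * k" by (rule degree_power_le)
    also have "\<dots> \<le> K * degree T" using that by (simp add: mult.commute)
    finally show ?thesis by (simp add: N_def)
  qed
  have "(\<Sum>k<K. A $ k * (\<Sum>j<M. B $ j * t ^ j) ^ k) = (\<Sum>k<K. A $ k * poly (T ^ k) t)"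
    by (simp add: poly_power poly_truncate_fps T_def)
  also have "\<dots> = (\<Sum>k<K. A $ k * (\<Sum>n<N. coeff (T ^ k) n * t ^ n))"
    by (intro sum.cong refl, subst poly_conv_sum_lessThan[OF degree_less]) auto
  also have "\<dots> \<le> (\<Sum>k<K. A $ k * (\<Sum>n<N. (B ^ k) $ n * t ^ n))"
    using A t coeff_truncate_fps_power_le[OF B, of M] unfolding T_def
    by (intro sum_mono mult_left_mono mult_right_mono) auto
  also have "\<dots> = (\<Sum>n<N. \<Sum>k<K. A $ k * (B ^ k) $ n * t ^ n)"
    by (subst sum.swap) (simp add: sum_distrib_left mult.assoc)
  also have "\<dots> \<le> (\<Sum>n<N. \<Sum>k\<in>{0..n}. A $ k * (B ^ k) $ n * t ^ n)"
  proof (intro sum_mono)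
    fix n
    have "(B ^ k) $ n = 0" if "n < k" for k
      using startsby_zero_power_prefix[OF B0] that by blast
    then have "(\<Sum>k<K. A $ k * (B ^ k) $ n * t ^ n) = (\<Sum>k\<in>{..<K} \<inter> {0..n}. A $ k * (B ^ k) $ n * t ^ n)"
      by (intro sum.mono_neutral_right) auto
    also have "\<dots> \<le> (\<Sum>k\<in>{0..n}. A $ k * (B ^ k) $ n * t ^ n)"
      using A B t fps_power_nth_mono[of B B] by (intro sum_mono2) (auto intro!: mult_nonneg_nonneg)
    finally show "(\<Sum>k<K. A $ k * (B ^ k) $ n * t ^ n) \<le> (\<Sum>k\<in>{0..n}. A $ k * (B ^ k) $ n * t ^ n)" .
  qed
  also have "\<dots> = (\<Sum>n<N. (A oo B) $ n * t ^ n)"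
    by (simp add: fps_compose_nth sum_distrib_right)
  finally show "(\<Sum>k<K. A $ k * (\<Sum>j<M. B $ j * t ^ j) ^ k) \<le> (\<Sum>n<N. (A oo B) $ n * t ^ n)" .
qed

text \<open>
  No radius-of-convergence hypothesis is needed: \<open>t\<close> may lie on the boundary of convergence
  of \<open>B\<close>, as happens below for \<open>w = 1 / (1 + c)\<close>.
\<close>

lemma sums_fps_compose_nonneg:
  fixes A B :: "real fps"
  assumes A: "\<And>n. 0 \<le> A $ n" and B: "\<And>n. 0 \<le> B $ n" and B0: "B $ 0 = 0" and t: "t \<ge> 0"
    and B_sums: "(\<lambda>n. B $ n * t ^ n) sums s" and A_summable: "summable (\<lambda>k. A $ k * s ^ k)"
  shows "(\<lambda>n. (A oo B) $ n * t ^ n) sums (\<Sum>k. A $ k * s ^ k)"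
proof -
  have B_partial_nonneg: "0 \<le> (\<Sum>j<N. B $ j * t ^ j)" for N
    using B t by (intro sum_nonneg) auto
  have B_partial_le: "(\<Sum>j<N. B $ j * t ^ j) \<le> s" for N
    using sum_le_suminf[OF sums_summable[OF B_sums], of "{..<N}"] B t sums_unique[OF B_sums] by auto
  have A_terms_nonneg: "0 \<le> A $ k * s ^ k" for k
    using A B_partial_nonneg[of 0] B_partial_le[of 0] by simp
  have AB_terms_nonneg: "0 \<le> (A oo B) $ n * t ^ n" for n
    using fps_compose_nth_nonneg[OF A B] t by simp
  have upper: "(\<Sum>n<N. (A oo B) $ n * t ^ n) \<le> (\<Sum>k. A $ k * s ^ k)" for N
  proof -
    have "(\<Sum>n<N. (A oo B) $ n * t ^ n) \<le> (\<Sum>k<N. A $ k * (\<Sum>j<N. B $ j * t ^ j) ^ k)"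
      by (rule fps_compose_partial_sum_le[OF A B t])
    also have "\<dots> \<le> (\<Sum>k<N. A $ k * s ^ k)"
      using A B_partial_le B_partial_nonneg by (intro sum_mono mult_left_mono power_mono) auto
    also have "\<dots> \<le> (\<Sum>k. A $ k * s ^ k)"
      using A_terms_nonneg by (intro sum_le_suminf[OF A_summable]) auto
    finally show ?thesis .
  qed
  have AB_summable: "summable (\<lambda>n. (A oo B) $ n * t ^ n)"
    by (rule summableI_nonneg_bounded[OF AB_terms_nonneg upper])
  have lower: "(\<Sum>k<K. A $ k * s ^ k) \<le> (\<Sum>n. (A oo B) $ n * t ^ n)" for K
  proof (rule LIMSEQ_le_const2)
    show "(\<lambda>M. \<Sum>k<K. A $ k * (\<Sum>j<M. B $ j * t ^ j) ^ k) \<longlonglongrightarrow> (\<Sum>k<K. A $ k * s ^ k)"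
      using B_sums unfolding sums_def by (intro tendsto_intros)
    show "\<exists>M0. \<forall>M\<ge>M0. (\<Sum>k<K. A $ k * (\<Sum>j<M. B $ j * t ^ j) ^ k) \<le> (\<Sum>n. (A oo B) $ n * t ^ n)"
    proof (intro exI allI impI)
      fix M
      obtain N where "(\<Sum>k<K. A $ k * (\<Sum>j<M. B $ j * t ^ j) ^ k) \<le> (\<Sum>n<N. (A oo B) $ n * t ^ n)"
        using fps_compose_partial_sum_ge[OF A B B0 t] .
      also have "\<dots> \<le> (\<Sum>n. (A oo B) $ n * t ^ n)"
        using AB_terms_nonneg by (intro sum_le_suminf[OF AB_summable]) auto
      finally show "(\<Sum>k<K. A $ k * (\<Sum>j<M. B $ j * t ^ j) ^ k) \<le> (\<Sum>n. (A oo B) $ n * t ^ n)" .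
    qed
  qed
  have "(\<Sum>n. (A oo B) $ n * t ^ n) = (\<Sum>k. A $ k * s ^ k)"
    using suminf_le_const[OF AB_summable upper] suminf_le_const[OF A_summable lower] by simp
  then show ?thesis using summable_sums[OF AB_summable] by simp
qed

section \<open>Evaluating the inverse series\<close>

lemma sums_fps_neg_ln_one_minus:
  fixes g :: real
  assumes "\<bar>g\<bar> < 1"
  shows "(\<lambda>k. fps_neg_ln_one_minus $ k * g ^ k) sums (- ln (1 - g))"
proof -
  have "(\<lambda>n. - (- ((-(-g)) ^ n) / of_nat n)) sums (- ln (1 + - g))"
    using assms by (intro sums_minus ln_series') auto
  moreover have "- (- ((-(-g)) ^ n) / of_nat n) = fps_neg_ln_one_minus $ n * g ^ n" for n
    by (simp add: fps_neg_ln_one_minus_def)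
  ultimately show ?thesis by simp
qed

definition psi :: "real \<Rightarrow> real \<Rightarrow> real" where
  "psi c w = w * (1 - w) powr c"

lemma psi_strict_mono:
  assumes c: "c > 0" and g: "0 \<le> g" "g < w" and w: "w \<le> 1 / (1 + c)"
  shows "psi c g < psi c w"
proof -
  have w1: "w < 1" using w c g by (smt (verit) divide_less_eq_1_pos)
  show ?thesis
  proof (cases "g = 0")
    case True
    then show ?thesis using g w1 by (simp add: psi_def)
  next
    case False
    define r where "r = g / w"
    define s where "s = (1 - g) / (1 - w)"
    have r: "r > 0" using False g by (simp add: r_def)
    have s: "s - 1 > 0" using g w1 by (simp add: s_def field_simps)
    have "(r - 1) + c * (s - 1) = (w - g) * (c * w - (1 - w)) / (w * (1 - w))"
      using g w1 by (simp add: r_def s_def field_simps)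
    moreover have "c * w - (1 - w) \<le> 0" using w c by (simp add: field_simps)
    ultimately have "(r - 1) + c * (s - 1) \<le> 0"
      using g w1 by (simp add: divide_nonpos_pos mult_nonneg_nonpos)
    moreover have "ln r \<le> r - 1" "ln s < s - 1"
      using ln_le_minus_one[OF r] ln_add_one_self_less_self[OF s] by auto
    ultimately have "ln (r * s powr c) < 0"
      using r s c by (simp add: ln_mult ln_powr) (smt (verit) mult_strict_left_mono)
    then have "r * s powr c < 1" using r s by (simp add: ln_less_zero_iff)
    then show ?thesis
      using g w1 by (simp add: psi_def r_def s_def powr_divide field_simps)
  qed
qed

lemma psi_le_psi_max:
  assumes c: "c > 0" and u: "0 \<le> u" "u < 1"
  shows "psi c u \<le> psi c (1 / (1 + c))"
proof (cases "u = 0")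
  case True
  then show ?thesis using c by (simp add: psi_def)
next
  case False
  define m where "m = 1 / (1 + c)"
  have m: "0 < m" "m < 1" using c by (auto simp: m_def)
  define r where "r = u / m"
  define s where "s = (1 - u) / (1 - m)"
  have rs: "r > 0" "s > 0" using False u m by (auto simp: r_def s_def)
  have "ln r + c * ln s \<le> (r - 1) + c * (s - 1)"
    using ln_le_minus_one[OF rs(1)] ln_le_minus_one[OF rs(2)] c by (smt (verit) mult_left_mono)
  also have "(r - 1) + c * (s - 1) = 0"
    using c m by (simp add: r_def s_def m_def field_simps)
  finally have "ln (r * s powr c) \<le> 0" using rs by (simp add: ln_mult ln_powr)
  then have "r * s powr c \<le> 1" using rs by simp
  then show ?thesis
    using u m by (simp add: psi_def m_def [symmetric] r_def s_def powr_divide field_simps)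
qed

lemma fps_inv_psi_fps_partial_sum_le:
  assumes c: "c \<ge> 0" and w: "0 \<le> w" "w < 1"
  shows "(\<Sum>n<N. fps_inv (psi_fps c) $ n * psi c w ^ n) \<le> w"
proof (induction N)
  case (Suc N)
  define G where "G = fps_inv (psi_fps c)"
  define t where "t = psi c w"
  have t: "t \<ge> 0" using w by (simp add: t_def psi_def)
  have E_nonneg: "0 \<le> fps_pochhammer c $ n" for n using c by (rule fps_pochhammer_nth_nonneg)
  have E_sums: "(\<lambda>k. fps_pochhammer c $ k * w ^ k) sums ((1 - w) powr (- c))"
    using w by (intro sums_fps_pochhammer) simp
  have G_nonneg: "0 \<le> G $ n" for n unfolding G_def using c by (rule fps_inv_psi_fps_nth_nonneg)
  have G0: "G $ 0 = 0" by (simp add: G_def fps_inv_def)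
  have G_Suc: "G $ Suc n = (fps_pochhammer c oo G) $ n" for n
    unfolding G_def by (subst fps_inv_psi_fps_eq) simp
  have "(\<Sum>n<Suc N. G $ n * t ^ n) = t * (\<Sum>n<N. (fps_pochhammer c oo G) $ n * t ^ n)"
    by (simp add: sum.lessThan_Suc_shift G_Suc G0 sum_distrib_left algebra_simps del: sum.lessThan_Suc)
  also have "\<dots> \<le> t * (\<Sum>k<N. fps_pochhammer c $ k * (\<Sum>j<N. G $ j * t ^ j) ^ k)"
    using fps_compose_partial_sum_le[OF E_nonneg G_nonneg t] t by (intro mult_left_mono) auto
  also have "\<dots> \<le> t * (\<Sum>k<N. fps_pochhammer c $ k * w ^ k)"
    using Suc.IH t E_nonneg G_nonneg
    by (intro mult_left_mono sum_mono power_mono) (auto simp: G_def t_def intro!: sum_nonneg)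
  also have "\<dots> \<le> t * (1 - w) powr (- c)"
    using sum_le_suminf[OF sums_summable[OF E_sums], of "{..<N}"] sums_unique[OF E_sums] E_nonneg w t
    by (intro mult_left_mono) (auto intro!: mult_nonneg_nonneg simp del: fps_pochhammer_nth)
  also have "\<dots> = w"
    using w by (simp add: t_def psi_def powr_minus field_simps)
  finally show ?case by (simp add: G_def t_def)
qed (use w in simp)

lemma sums_fps_inv_psi_fps:
  assumes c: "c > 0" and w: "0 \<le> w" "w \<le> 1 / (1 + c)"
  shows "(\<lambda>n. fps_inv (psi_fps c) $ n * psi c w ^ n) sums w"
proof -
  define G where "G = fps_inv (psi_fps c)"
  define t where "t = psi c w"
  have w1: "w < 1" using w c by (smt (verit) divide_less_eq_1_pos)
  have t: "t \<ge> 0" using w by (simp add: t_def psi_def)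
  have E_nonneg: "0 \<le> fps_pochhammer c $ n" for n using c by (intro fps_pochhammer_nth_nonneg) simp
  have G_nonneg: "0 \<le> G $ n" for n unfolding G_def using c by (intro fps_inv_psi_fps_nth_nonneg) simp
  have G0: "G $ 0 = 0" by (simp add: G_def fps_inv_def)
  have G_terms_nonneg: "0 \<le> G $ n * t ^ n" for n using G_nonneg t by simp
  have G_partial_le: "(\<Sum>n<N. G $ n * t ^ n) \<le> w" for N
    unfolding G_def t_def using c w w1 by (intro fps_inv_psi_fps_partial_sum_le) auto
  have G_summable: "summable (\<lambda>n. G $ n * t ^ n)"
    by (rule summableI_nonneg_bounded[OF G_terms_nonneg G_partial_le])
  define g where "g = (\<Sum>n. G $ n * t ^ n)"
  have G_sums: "(\<lambda>n. G $ n * t ^ n) sums g" using G_summable by (simp add: g_def summable_sums)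
  have "g \<le> w" unfolding g_def by (rule suminf_le_const[OF G_summable G_partial_le])
  have "0 \<le> g" unfolding g_def using G_terms_nonneg by (intro suminf_nonneg[OF G_summable]) auto
  have E_sums: "(\<lambda>k. fps_pochhammer c $ k * g ^ k) sums ((1 - g) powr (- c))"
    using \<open>0 \<le> g\<close> \<open>g \<le> w\<close> w1 by (intro sums_fps_pochhammer) simp
  have "(\<lambda>n. (fps_pochhammer c oo G) $ n * t ^ n) sums ((1 - g) powr (- c))"
    using sums_fps_compose_nonneg[OF E_nonneg G_nonneg G0 t G_sums sums_summable[OF E_sums]]
      sums_unique[OF E_sums] by simp
  then have "(\<lambda>n. G $ Suc n * t ^ Suc n) sums (t * (1 - g) powr (- c))"
    unfolding G_def by (subst fps_inv_psi_fps_eq) (simp add: sums_mult mult_ac)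
  moreover have "(\<lambda>n. G $ Suc n * t ^ Suc n) sums g"
    using G_sums G0 by (subst sums_Suc_iff) simp
  ultimately have "g = t * (1 - g) powr (- c)" using sums_unique2 by blast
  \<comment> \<open>\<open>g\<close> solves \<open>psi c g = t\<close>, and \<open>psi c\<close> is injective on \<open>[0, 1 / (1 + c)]\<close>.\<close>
  then have "psi c g = psi c w"
    using \<open>g \<le> w\<close> w1 by (simp add: t_def psi_def powr_minus field_simps)
  then have "g = w"
    using psi_strict_mono[OF c \<open>0 \<le> g\<close> _ w(2)] \<open>g \<le> w\<close> by fastforce
  then show ?thesis using G_sums by (simp add: G_def t_def)
qed

lemma sums_lagrange_ln_series:
  assumes c: "c > 0" and w: "0 \<le> w" "w \<le> 1 / (1 + c)"
  shows "(\<lambda>n. (fps_neg_ln_one_minus oo fps_inv (psi_fps c)) $ n * psi c w ^ n) sums (- ln (1 - w))"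
proof -
  have w1: "w < 1" using w c by (smt (verit) divide_less_eq_1_pos)
  have L_sums: "(\<lambda>k. fps_neg_ln_one_minus $ k * w ^ k) sums (- ln (1 - w))"
    using w w1 by (intro sums_fps_neg_ln_one_minus) simp
  have "psi c w \<ge> 0" using w w1 by (simp add: psi_def)
  moreover have "0 \<le> (fps_neg_ln_one_minus :: real fps) $ n" "0 \<le> fps_inv (psi_fps c) $ n" for n
    using c by (simp_all add: fps_neg_ln_one_minus_def fps_inv_psi_fps_nth_nonneg)
  ultimately show ?thesis
    using sums_fps_compose_nonneg[OF _ _ _ _ sums_fps_inv_psi_fps[OF assms] sums_summable[OF L_sums]]
      sums_unique[OF L_sums]
    by (simp add: fps_inv_def)
qed

section \<open>The functions \<open>phi\<close>, \<open>f_ab\<close> and \<open>g_ab\<close>\<close>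

lemma x0_gt_0: "0 < a \<Longrightarrow> a < b \<Longrightarrow> 0 < x0 a b"
  by (simp add: x0_def)

lemma x0_le_1: "0 < a \<Longrightarrow> a < b \<Longrightarrow> x0 a b \<le> 1"
  unfolding x0_def by (rule powr_le1) auto

lemma x0_powr: "0 < a \<Longrightarrow> a < b \<Longrightarrow> x0 a b powr (b - a) = a / b"
  by (simp add: x0_def powr_powr)

lemma phi_eq_psi:
  assumes "0 < a" "a < b" "y > 0"
  shows "phi a b y = psi (a / (b - a)) (1 - y powr (b - a))"
proof -
  have "(1 - (1 - y powr (b - a))) powr (a / (b - a)) = y powr a"
    using assms by (simp add: powr_powr)
  moreover have "y powr (b - a) * y powr a = y powr b" by (simp add: powr_add [symmetric])
  ultimately show ?thesis by (simp add: phi_def psi_def algebra_simps)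
qed

lemma one_minus_x0_powr:
  "0 < a \<Longrightarrow> a < b \<Longrightarrow> 1 - x0 a b powr (b - a) = 1 / (1 + a / (b - a))"
  by (simp add: x0_powr field_simps)

lemma phi_bounds:
  assumes ab: "0 < a" "a < b" and x: "0 \<le> x" "x \<le> 1"
  shows "0 \<le> phi a b x \<and> phi a b x \<le> phi a b (x0 a b)"
proof (cases "x = 0")
  case True
  have "0 \<le> psi (a / (b - a)) (1 / (1 + a / (b - a)))"
    using ab by (simp add: psi_def)
  then show ?thesis
    using True ab phi_eq_psi[OF ab x0_gt_0[OF ab]] by (simp add: phi_def one_minus_x0_powr)
next
  case False
  then have "x > 0" using x by simp
  have "x powr (b - a) \<le> 1" using x ab by (simp add: powr_le1)
  moreover have "0 < x powr (b - a)" using \<open>x > 0\<close> by simp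
  ultimately show ?thesis
    using ab psi_le_psi_max[of "a / (b - a)" "1 - x powr (b - a)"]
      phi_eq_psi[OF ab \<open>x > 0\<close>] phi_eq_psi[OF ab x0_gt_0[OF ab]]
    by (simp add: one_minus_x0_powr psi_def)
qed

lemma phi_in_image_right_branch:
  assumes ab: "0 < a" "a < b" and x: "0 \<le> x" "x \<le> 1"
  shows "phi a b x \<in> phi a b ` {x0 a b..1}"
proof -
  have "continuous_on {x0 a b..1} (\<lambda>y. y powr a - y powr b)"
    using x0_gt_0[OF ab] by (intro continuous_intros) auto
  then have "continuous_on {x0 a b..1} (phi a b)"
    by (simp add: phi_def [abs_def])
  moreover have "phi a b 1 = 0" by (simp add: phi_def)
  ultimately obtain y where "x0 a b \<le> y" "y \<le> 1" "phi a b y = phi a b x"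
    using IVT2'[of "phi a b" 1 "phi a b x" "x0 a b"] phi_bounds[OF ab x] x0_le_1[OF ab] by auto
  then show ?thesis by (metis atLeastAtMost_iff image_eqI)
qed

lemma series_term_nonneg:
  assumes ab: "0 < a" "a < b" and x: "0 \<le> x" "x \<le> 1"
  shows "0 \<le> series_term a b x n"
proof -
  have "0 < a / (b - a) * real n + 1" using ab by (simp add: add_nonneg_pos)
  then show ?thesis
    using phi_bounds[OF ab x] unfolding series_term_def phi_def
    by (intro divide_nonneg_pos mult_nonneg_nonneg pochhammer_nonneg zero_le_power) auto
qed

lemma series_term_sums:
  assumes ab: "0 < a" "a < b" and y: "x0 a b \<le> y" "y \<le> 1" and phi_y: "phi a b y = phi a b x"
  shows "(\<lambda>n. series_term a b x (Suc n)) sums ((b - a) * - ln y)"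
proof -
  define c where "c = a / (b - a)"
  define w where "w = 1 - y powr (b - a)"
  define C :: "real fps" where "C = fps_neg_ln_one_minus oo fps_inv (psi_fps c)"
  have "y > 0" using x0_gt_0[OF ab] y by simp
  have "c > 0" using ab by (simp add: c_def)
  have "0 \<le> w" using y ab \<open>y > 0\<close> by (simp add: w_def powr_le1)
  moreover have "w \<le> 1 / (1 + c)"
    using powr_mono2[of "b - a" "x0 a b" y] y x0_gt_0[OF ab] ab one_minus_x0_powr[OF ab]
    by (simp add: w_def c_def)
  ultimately have "(\<lambda>n. C $ n * psi c w ^ n) sums (- ln (1 - w))"
    unfolding C_def using \<open>c > 0\<close> by (rule sums_lagrange_ln_series [rotated])
  moreover have "psi c w = phi a b x"
    using phi_eq_psi[OF ab \<open>y > 0\<close>] phi_y by (simp add: c_def w_def)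
  moreover have "- ln (1 - w) = (b - a) * - ln y"
    using \<open>y > 0\<close> by (simp add: w_def ln_powr)
  ultimately have "(\<lambda>n. C $ n * phi a b x ^ n) sums ((b - a) * - ln y)" by simp
  moreover have "C $ 0 = 0" by (simp add: C_def fps_neg_ln_one_minus_def)
  ultimately have "(\<lambda>n. C $ Suc n * phi a b x ^ Suc n) sums ((b - a) * - ln y)"
    by (subst sums_Suc_iff) simp
  moreover have "C $ Suc n * phi a b x ^ Suc n = series_term a b x (Suc n)" for n
    using lagrange_ln_series_nth[of "Suc n" c]
    by (simp add: C_def c_def series_term_def phi_def mult.commute)
  ultimately show ?thesis by simp
qed

theorem proposition6:
  fixes a b x :: real
  assumes "0 < a" "a < b" "0 \<le> x" "x \<le> 1"
  shows "summable (\<lambda>n. \<bar>series_term a b x (Suc n)\<bar>)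
    \<and> - ln (g_ab a b x) = 1 / (b - a) * (\<Sum>n. series_term a b x (Suc n))
    \<and> (x0 a b \<le> x \<longrightarrow> 1 / (b - a) * (\<Sum>n. series_term a b x (Suc n)) = - ln x)
    \<and> (x \<le> x0 a b \<longrightarrow> 1 / (b - a) * (\<Sum>n. series_term a b x (Suc n)) = - ln (f_ab a b x))"
proof -
  note ab = assms(1,2)
  have image: "phi a b x \<in> phi a b ` {x0 a b..1}"
    by (rule phi_in_image_right_branch[OF assms])
  have "g_ab a b x \<in> {x0 a b..1}" "phi a b (g_ab a b x) = phi a b x"
    using inv_into_into[OF image] f_inv_into_f[OF image] by (simp_all add: g_ab_def rinv_def)
  then have sums: "(\<lambda>n. series_term a b x (Suc n)) sums ((b - a) * - ln (g_ab a b x))"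
    using series_term_sums[OF ab] by simp
  have "summable (\<lambda>n. \<bar>series_term a b x (Suc n)\<bar>)"
    using sums_summable[OF sums] series_term_nonneg[OF assms] by simp
  moreover have "- ln (g_ab a b x) = 1 / (b - a) * (\<Sum>n. series_term a b x (Suc n))"
    using sums_unique[OF sums] ab by (simp add: field_simps)
  moreover have "1 / (b - a) * (\<Sum>n. series_term a b x (Suc n)) = - ln x" if "x0 a b \<le> x"
    using sums_unique[OF series_term_sums[OF ab that assms(4) refl]] ab by (simp add: field_simps)
  moreover have "f_ab a b x = g_ab a b x" if "x \<le> x0 a b"
    using that by (simp add: f_ab_def g_ab_def)
  ultimately show ?thesis by simp
qed

end
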